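(* Let $A=\{(x_k,y_k):k\in[\ell]\}\subset\mathbb N^d$ be finite, $d=m+n$. Then for all $\bar k\in[\ell]$: (a) $\mathbb D_{\mathrm{in}}(x_{\bar k},y_{\bar k},T_{\mathbb Q_{-\infty},V}(A))=\mathbb D_{\mathrm{in}}(x_{\bar k},y_{\bar k},Z_{\mathbb Q_{-\infty},V}(A))$; (b) $\mathbb D_{\mathrm{in}}(x_{\bar k},y_{\bar k},T_{\mathbb Q_{-\infty},C}(A))=\mathbb D_{\mathrm{in}}(x_{\bar k},y_{\bar k},Z_{\mathbb Q_{-\infty},C}(A))$; (c) $\mathbb D_{\mathrm{out}}(x_{\bar k},y_{\bar k},T_{\mathbb Q_{-\infty},V}(A))=\mathbb D_{\mathrm{out}}(x_{\bar k},y_{\bar k},Z_{\mathbb Q_{-\infty},V}(A))$; (d) $\mathbb D_{\mathrm{out}}(x_{\bar k},y_{\bar k},T_{\mathbb Q_{-\infty},C}(A))=\mathbb D_{\mathrm{out}}(x_{\bar k},y_{\bar k},Z_{\mathbb Q_{-\infty},C}(A))$.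
   Context: $\mathbb N$ is the set of non-negative integers; $[\ell]=\{1,\dots,\ell\}$; $1\!\!1$ denotes a vector of ones; $\wedge$ is componentwise min. Min-Plus technologies: $T_{\mathbb Q_{-\infty},V}(A)=\{(x,y)\in\mathbb{R}_+^d: x\ge\bigwedge_k(t_k1\!\!1_m+x_k),\ y\le\bigwedge_k(t_k1\!\!1_n+y_k),\ \min_k t_k=0,\ t\in(\mathbb{R}\cup\{+\infty\})^\ell\}$, and $T_{\mathbb Q_{-\infty},C}(A)$ is the same without the constraint $\min_k t_k=0$. Discrete versions: $Z_{\mathbb Q_{-\infty},V}(A)=T_{\mathbb Q_{-\infty},V}(A)\cap\mathbb N^d$, $Z_{\mathbb Q_{-\infty},C}(A)=T_{\mathbb Q_{-\infty},C}(A)\cap\mathbb N^d$. Translation distance functions: $\mathbb D_{\mathrm{in}}(x,y,T)=\sup\{\delta\in\mathbb{R}:(x-\delta1\!\!1_m,y)\in T\}$, $\mathbb D_{\mathrm{out}}(x,y,T)=\sup\{\delta\in\mathbb{R}:(x,y+\delta1\!\!1_n)\in T\}$. *)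

theory Defs
  imports "HOL-Analysis.Analysis" "HOL-Library.Extended_Real"
begin

text \<open>Data: the finite set A = {(X k, Y k) : k in {1..l}}, inputs in real^'m,
 outputs in real^'n (d = m + n). Intensities t k in R union {+inf}, modelled as
 extended reals different from -inf.\<close>

definition TV :: "nat \<Rightarrow> (nat \<Rightarrow> real^'m) \<Rightarrow> (nat \<Rightarrow> real^'n) \<Rightarrow> ((real^'m) \<times> (real^'n)) set" where
  "TV l X Y = {(x, y). (\<forall>i. 0 \<le> x $ i) \<and> (\<forall>j. 0 \<le> y $ j) \<and>
     (\<exists>t :: nat \<Rightarrow> ereal. (\<forall>k\<in>{1..l}. t k \<noteq> -\<infinity>) \<and>
        (\<forall>i. (MIN k\<in>{1..l}. t k + ereal (X k $ i)) \<le> ereal (x $ i)) \<and>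
        (\<forall>j. ereal (y $ j) \<le> (MIN k\<in>{1..l}. t k + ereal (Y k $ j))) \<and>
        (MIN k\<in>{1..l}. t k) = 0)}"

definition TC :: "nat \<Rightarrow> (nat \<Rightarrow> real^'m) \<Rightarrow> (nat \<Rightarrow> real^'n) \<Rightarrow> ((real^'m) \<times> (real^'n)) set" where
  "TC l X Y = {(x, y). (\<forall>i. 0 \<le> x $ i) \<and> (\<forall>j. 0 \<le> y $ j) \<and>
     (\<exists>t :: nat \<Rightarrow> ereal. (\<forall>k\<in>{1..l}. t k \<noteq> -\<infinity>) \<and>
        (\<forall>i. (MIN k\<in>{1..l}. t k + ereal (X k $ i)) \<le> ereal (x $ i)) \<and>
        (\<forall>j. ereal (y $ j) \<le> (MIN k\<in>{1..l}. t k + ereal (Y k $ j))))}"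

definition natpts :: "((real^'m) \<times> (real^'n)) set" where
  "natpts = {(x, y). (\<forall>i. x $ i \<in> \<nat>) \<and> (\<forall>j. y $ j \<in> \<nat>)}"

definition ZV :: "nat \<Rightarrow> (nat \<Rightarrow> real^'m) \<Rightarrow> (nat \<Rightarrow> real^'n) \<Rightarrow> ((real^'m) \<times> (real^'n)) set" where
  "ZV l X Y = TV l X Y \<inter> natpts"

definition ZC :: "nat \<Rightarrow> (nat \<Rightarrow> real^'m) \<Rightarrow> (nat \<Rightarrow> real^'n) \<Rightarrow> ((real^'m) \<times> (real^'n)) set" where
  "ZC l X Y = TC l X Y \<inter> natpts"

definition Din :: "real^'m \<Rightarrow> real^'n \<Rightarrow> ((real^'m) \<times> (real^'n)) set \<Rightarrow> ereal" where
  "Din x y T = Sup (ereal ` {\<delta>. (x - \<delta> *\<^sub>R (\<chi> i. 1), y) \<in> T})"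

definition Dout :: "real^'m \<Rightarrow> real^'n \<Rightarrow> ((real^'m) \<times> (real^'n)) set \<Rightarrow> ereal" where
  "Dout x y T = Sup (ereal ` {\<delta>. (x, y + \<delta> *\<^sub>R (\<chi> j. 1)) \<in> T})"

end

theory Submission
  imports Defs
begin

text \<open>Let \<open>\<rho>\<close> be floor or ceiling. Since \<open>\<rho>\<close> is monotone, fixes 0 and commutes with
  adding integers, applying it to all intensities commutes with the minima in the definition of
  the technologies when the data are integral; hence rounding every coordinate of a point of
  \<open>T\<close> by \<open>\<rho>\<close> yields again a point of \<open>T\<close>. At an integral point, a feasible input contraction
  \<open>\<delta>\<close> is thus improved to the integral contraction \<open>\<lceil>\<delta>\<rceil>\<close> by flooring, since
  \<open>\<lfloor>x - \<delta>\<rfloor> = x - \<lceil>\<delta>\<rceil>\<close>, and a feasible output expansion \<open>\<delta>\<close> to \<open>\<lceil>\<delta>\<rceil>\<close> by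
  ceiling, since \<open>\<lceil>y + \<delta>\<rceil> = y + \<lceil>\<delta>\<rceil>\<close>; both land in the natural numbers.\<close>

locale integer_rounding =
  fixes \<rho> :: "real \<Rightarrow> real"
  assumes mono_round: "mono \<rho>"
    and round_add_integer: "a \<in> \<int> \<Longrightarrow> \<rho> (s + a) = \<rho> s + a"
    and round_zero: "\<rho> 0 = 0"
begin

lemma round_nonneg: "0 \<le> s \<Longrightarrow> 0 \<le> \<rho> s"
  using mono_round round_zero by (metis monoD)

definition ereal_round :: "ereal \<Rightarrow> ereal" where
  "ereal_round t = (case t of ereal s \<Rightarrow> ereal (\<rho> s) | _ \<Rightarrow> t)"

lemma ereal_round_ereal [simp]: "ereal_round (ereal s) = ereal (\<rho> s)"
  by (simp add: ereal_round_def)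

lemma ereal_round_neq_minf: "t \<noteq> -\<infinity> \<Longrightarrow> ereal_round t \<noteq> -\<infinity>"
  by (cases t) (simp_all add: ereal_round_def)

lemma ereal_round_zero: "ereal_round 0 = 0"
  by (simp add: zero_ereal_def round_zero)

lemma mono_ereal_round: "mono ereal_round"
proof
  fix t u :: ereal
  assume "t \<le> u"
  then show "ereal_round t \<le> ereal_round u"
    by (cases t; cases u) (simp_all add: ereal_round_def monoD[OF mono_round])
qed

lemma ereal_round_add_integer:
  "a \<in> \<int> \<Longrightarrow> ereal_round (t + ereal a) = ereal_round t + ereal a"
  by (cases t) (simp_all add: ereal_round_def round_add_integer)

lemma ereal_round_Min_add_integer:
  assumes "finite K" "K \<noteq> {}" "\<forall>k\<in>K. a k \<in> \<int>"
  shows "ereal_round (MIN k\<in>K. t k + ereal (a k)) = (MIN k\<in>K. ereal_round (t k) + ereal (a k))"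
proof -
  have "ereal_round (MIN k\<in>K. t k + ereal (a k)) = (MIN k\<in>K. ereal_round (t k + ereal (a k)))"
    using mono_Min_commute[OF mono_ereal_round] assms(1,2) by (simp add: image_image)
  also have "\<dots> = (MIN k\<in>K. ereal_round (t k) + ereal (a k))"
    using assms(3) by (simp add: ereal_round_add_integer)
  finally show ?thesis .
qed

lemma ereal_round_Min_le:
  assumes "finite K" "K \<noteq> {}" "\<forall>k\<in>K. a k \<in> \<int>"
    and "(MIN k\<in>K. t k + ereal (a k)) \<le> ereal s"
  shows "(MIN k\<in>K. ereal_round (t k) + ereal (a k)) \<le> ereal (\<rho> s)"
proof -
  have "(MIN k\<in>K. ereal_round (t k) + ereal (a k)) = ereal_round (MIN k\<in>K. t k + ereal (a k))"
    using ereal_round_Min_add_integer[OF assms(1-3)] by simp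
  also have "\<dots> \<le> ereal_round (ereal s)"
    using assms(4) by (rule monoD[OF mono_ereal_round])
  finally show ?thesis
    by simp
qed

lemma ereal_round_le_Min:
  assumes "finite K" "K \<noteq> {}" "\<forall>k\<in>K. a k \<in> \<int>"
    and "ereal s \<le> (MIN k\<in>K. t k + ereal (a k))"
  shows "ereal (\<rho> s) \<le> (MIN k\<in>K. ereal_round (t k) + ereal (a k))"
proof -
  have "ereal (\<rho> s) = ereal_round (ereal s)"
    by simp
  also have "\<dots> \<le> ereal_round (MIN k\<in>K. t k + ereal (a k))"
    using assms(4) by (rule monoD[OF mono_ereal_round])
  also have "\<dots> = (MIN k\<in>K. ereal_round (t k) + ereal (a k))"
    using ereal_round_Min_add_integer[OF assms(1-3)] .
  finally show ?thesis .
qed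

lemma rounded_intensities_feasible:
  assumes "finite K" "K \<noteq> {}" "\<forall>k\<in>K. \<forall>i. X k $ i \<in> \<int>" "\<forall>k\<in>K. \<forall>j. Y k $ j \<in> \<int>"
    and "\<forall>i. (MIN k\<in>K. t k + ereal (X k $ i)) \<le> ereal (x $ i)"
    and "\<forall>j. ereal (y $ j) \<le> (MIN k\<in>K. t k + ereal (Y k $ j))"
  shows "\<forall>i. (MIN k\<in>K. ereal_round (t k) + ereal (X k $ i)) \<le> ereal (\<rho> (x $ i))"
    and "\<forall>j. ereal (\<rho> (y $ j)) \<le> (MIN k\<in>K. ereal_round (t k) + ereal (Y k $ j))"
  by (intro allI ereal_round_Min_le ereal_round_le_Min; use assms in blast)+

lemma TC_closed:
  assumes "1 \<le> l" "\<forall>k\<in>{1..l}. \<forall>i. X k $ i \<in> \<int>" "\<forall>k\<in>{1..l}. \<forall>j. Y k $ j \<in> \<int>"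
    and "(x, y) \<in> TC l X Y"
  shows "((\<chi> i. \<rho> (x $ i)), (\<chi> j. \<rho> (y $ j))) \<in> TC l X Y"
proof -
  have index_set: "finite {1..l}" "{1..l} \<noteq> {}"
    using assms(1) by auto
  obtain t where "\<forall>k\<in>{1..l}. t k \<noteq> -\<infinity>"
    and "\<forall>i. (MIN k\<in>{1..l}. t k + ereal (X k $ i)) \<le> ereal (x $ i)"
    and "\<forall>j. ereal (y $ j) \<le> (MIN k\<in>{1..l}. t k + ereal (Y k $ j))"
    and "(\<forall>i. 0 \<le> x $ i) \<and> (\<forall>j. 0 \<le> y $ j)"
    using assms(4) by (auto simp: TC_def)
  then show ?thesis
    using rounded_intensities_feasible[OF index_set assms(2,3)]
    by (auto simp: TC_def round_nonneg ereal_round_neq_minf intro!: exI[of _ "\<lambda>k. ereal_round (t k)"])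
qed

lemma TV_closed:
  assumes "1 \<le> l" "\<forall>k\<in>{1..l}. \<forall>i. X k $ i \<in> \<int>" "\<forall>k\<in>{1..l}. \<forall>j. Y k $ j \<in> \<int>"
    and "(x, y) \<in> TV l X Y"
  shows "((\<chi> i. \<rho> (x $ i)), (\<chi> j. \<rho> (y $ j))) \<in> TV l X Y"
proof -
  have index_set: "finite {1..l}" "{1..l} \<noteq> {}"
    using assms(1) by auto
  obtain t where "\<forall>k\<in>{1..l}. t k \<noteq> -\<infinity>"
    and "\<forall>i. (MIN k\<in>{1..l}. t k + ereal (X k $ i)) \<le> ereal (x $ i)"
    and "\<forall>j. ereal (y $ j) \<le> (MIN k\<in>{1..l}. t k + ereal (Y k $ j))"
    and "(\<forall>i. 0 \<le> x $ i) \<and> (\<forall>j. 0 \<le> y $ j)"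
    and min_t: "(MIN k\<in>{1..l}. t k) = 0"
    using assms(4) by (auto simp: TV_def)
  moreover have "(MIN k\<in>{1..l}. ereal_round (t k)) = 0"
    using mono_Min_commute[OF mono_ereal_round, of "t ` {1..l}"] index_set min_t
    by (simp add: image_image ereal_round_zero)
  ultimately show ?thesis
    using rounded_intensities_feasible[OF index_set assms(2,3)]
    by (auto simp: TV_def round_nonneg ereal_round_neq_minf intro!: exI[of _ "\<lambda>k. ereal_round (t k)"])
qed

end

interpretation floor_rounding: integer_rounding "\<lambda>s. real_of_int \<lfloor>s\<rfloor>"
proof
  show "mono (\<lambda>s. real_of_int \<lfloor>s\<rfloor>)"
    by (intro monoI) (simp add: floor_mono)
  show "real_of_int \<lfloor>s + a\<rfloor> = real_of_int \<lfloor>s\<rfloor> + a" if "a \<in> \<int>" for a s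
    using that by (auto elim!: Ints_cases)
qed simp

interpretation ceiling_rounding: integer_rounding "\<lambda>s. real_of_int \<lceil>s\<rceil>"
proof
  show "mono (\<lambda>s. real_of_int \<lceil>s\<rceil>)"
    by (intro monoI) (simp add: ceiling_mono)
  show "real_of_int \<lceil>s + a\<rceil> = real_of_int \<lceil>s\<rceil> + a" if "a \<in> \<int>" for a s
    using that by (auto elim!: Ints_cases)
qed simp

lemma floor_integer_diff: "a \<in> \<int> \<Longrightarrow> real_of_int \<lfloor>a - \<delta>\<rfloor> = a - real_of_int \<lceil>\<delta>\<rceil>"
  by (auto elim!: Ints_cases) (metis ceiling_diff_of_int floor_minus minus_diff_eq of_int_diff)

lemma ceiling_integer_add: "a \<in> \<int> \<Longrightarrow> real_of_int \<lceil>a + \<delta>\<rceil> = a + real_of_int \<lceil>\<delta>\<rceil>"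
  by (auto elim!: Ints_cases simp: add.commute)

lemma mem_natpts_iff:
  "(u, v) \<in> natpts \<longleftrightarrow> (\<forall>i. u $ i \<in> \<int> \<and> 0 \<le> u $ i) \<and> (\<forall>j. v $ j \<in> \<int> \<and> 0 \<le> v $ j)"
  by (simp add: natpts_def Nats_altdef2)

lemma Din_eq_Din_natpts:
  fixes x :: "real^'m" and y :: "real^'n"
  assumes x_int: "\<forall>i. x $ i \<in> \<int>" and y_int: "\<forall>j. y $ j \<in> \<int>"
    and nonneg: "T \<subseteq> {(u, v). (\<forall>i. 0 \<le> u $ i) \<and> (\<forall>j. 0 \<le> v $ j)}"
    and floor_closed: "\<And>u v. (u, v) \<in> T \<Longrightarrow> ((\<chi> i. of_int \<lfloor>u $ i\<rfloor>), (\<chi> j. of_int \<lfloor>v $ j\<rfloor>)) \<in> T"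
  shows "Din x y T = Din x y (T \<inter> natpts)"
  unfolding Din_def
proof (rule SUP_eq)
  fix \<delta> assume "\<delta> \<in> {\<delta>. (x - \<delta> *\<^sub>R (\<chi> i. 1), y) \<in> T}"
  then have "((\<chi> i. of_int \<lfloor>x $ i - \<delta>\<rfloor>), (\<chi> j. of_int \<lfloor>y $ j\<rfloor>)) \<in> T"
    using floor_closed by fastforce
  moreover have "(\<chi> i. real_of_int \<lfloor>x $ i - \<delta>\<rfloor>) = x - of_int \<lceil>\<delta>\<rceil> *\<^sub>R (\<chi> i. 1)"
    using x_int by (simp add: vec_eq_iff floor_integer_diff)
  moreover have "(\<chi> j. real_of_int \<lfloor>y $ j\<rfloor>) = y"
    using y_int by (auto simp: vec_eq_iff elim!: Ints_cases)
  ultimately have "(x - of_int \<lceil>\<delta>\<rceil> *\<^sub>R (\<chi> i. 1), y) \<in> T \<inter> natpts"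
    using nonneg x_int y_int by (fastforce simp: mem_natpts_iff)
  then show "\<exists>\<delta>'\<in>{\<delta>. (x - \<delta> *\<^sub>R (\<chi> i. 1), y) \<in> T \<inter> natpts}. ereal \<delta> \<le> ereal \<delta>'"
    by (intro bexI[of _ "of_int \<lceil>\<delta>\<rceil>"]) auto
qed auto

lemma Dout_eq_Dout_natpts:
  fixes x :: "real^'m" and y :: "real^'n"
  assumes x_int: "\<forall>i. x $ i \<in> \<int>" and y_int: "\<forall>j. y $ j \<in> \<int>"
    and nonneg: "T \<subseteq> {(u, v). (\<forall>i. 0 \<le> u $ i) \<and> (\<forall>j. 0 \<le> v $ j)}"
    and ceiling_closed: "\<And>u v. (u, v) \<in> T \<Longrightarrow> ((\<chi> i. of_int \<lceil>u $ i\<rceil>), (\<chi> j. of_int \<lceil>v $ j\<rceil>)) \<in> T"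
  shows "Dout x y T = Dout x y (T \<inter> natpts)"
  unfolding Dout_def
proof (rule SUP_eq)
  fix \<delta> assume "\<delta> \<in> {\<delta>. (x, y + \<delta> *\<^sub>R (\<chi> j. 1)) \<in> T}"
  then have "((\<chi> i. of_int \<lceil>x $ i\<rceil>), (\<chi> j. of_int \<lceil>y $ j + \<delta>\<rceil>)) \<in> T"
    using ceiling_closed by fastforce
  moreover have "(\<chi> i. real_of_int \<lceil>x $ i\<rceil>) = x"
    using x_int by (auto simp: vec_eq_iff elim!: Ints_cases)
  moreover have "(\<chi> j. real_of_int \<lceil>y $ j + \<delta>\<rceil>) = y + of_int \<lceil>\<delta>\<rceil> *\<^sub>R (\<chi> j. 1)"
    using y_int by (simp add: vec_eq_iff ceiling_integer_add)
  ultimately have "(x, y + of_int \<lceil>\<delta>\<rceil> *\<^sub>R (\<chi> j. 1)) \<in> T \<inter> natpts"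
    using nonneg x_int y_int by (fastforce simp: mem_natpts_iff)
  then show "\<exists>\<delta>'\<in>{\<delta>. (x, y + \<delta> *\<^sub>R (\<chi> j. 1)) \<in> T \<inter> natpts}. ereal \<delta> \<le> ereal \<delta>'"
    by (intro bexI[of _ "of_int \<lceil>\<delta>\<rceil>"]) auto
qed auto

lemma TC_subset_nonneg: "TC l X Y \<subseteq> {(u, v). (\<forall>i. 0 \<le> u $ i) \<and> (\<forall>j. 0 \<le> v $ j)}"
  by (auto simp: TC_def)

lemma TV_subset_nonneg: "TV l X Y \<subseteq> {(u, v). (\<forall>i. 0 \<le> u $ i) \<and> (\<forall>j. 0 \<le> v $ j)}"
  by (auto simp: TV_def)

theorem mainTheorem8:
  fixes l :: nat and X :: "nat \<Rightarrow> real^'m" and Y :: "nat \<Rightarrow> real^'n" and kb :: nat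
  assumes "\<forall>k\<in>{1..l}. \<forall>i. X k $ i \<in> \<nat>"
    and "\<forall>k\<in>{1..l}. \<forall>j. Y k $ j \<in> \<nat>"
    and "kb \<in> {1..l}"
  shows "Din (X kb) (Y kb) (TV l X Y) = Din (X kb) (Y kb) (ZV l X Y) \<and>
         Din (X kb) (Y kb) (TC l X Y) = Din (X kb) (Y kb) (ZC l X Y) \<and>
         Dout (X kb) (Y kb) (TV l X Y) = Dout (X kb) (Y kb) (ZV l X Y) \<and>
         Dout (X kb) (Y kb) (TC l X Y) = Dout (X kb) (Y kb) (ZC l X Y)"
proof -
  have l: "1 \<le> l"
    using assms(3) by simp
  have X_int: "\<forall>k\<in>{1..l}. \<forall>i. X k $ i \<in> \<int>" and Y_int: "\<forall>k\<in>{1..l}. \<forall>j. Y k $ j \<in> \<int>"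
    using assms(1,2) Nats_subset_Ints by blast+
  then have kb_int: "\<forall>i. X kb $ i \<in> \<int>" "\<forall>j. Y kb $ j \<in> \<int>"
    using assms(3) by blast+
  note closed = floor_rounding.TV_closed[OF l X_int Y_int] floor_rounding.TC_closed[OF l X_int Y_int]
    ceiling_rounding.TV_closed[OF l X_int Y_int] ceiling_rounding.TC_closed[OF l X_int Y_int]
  show ?thesis
    unfolding ZV_def ZC_def
    using Din_eq_Din_natpts[OF kb_int TV_subset_nonneg closed(1)]
      Din_eq_Din_natpts[OF kb_int TC_subset_nonneg closed(2)]
      Dout_eq_Dout_natpts[OF kb_int TV_subset_nonneg closed(3)]
      Dout_eq_Dout_natpts[OF kb_int TC_subset_nonneg closed(4)]
    by blast
qed

end
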